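(* Let $G$ be a bounded measurable function on $[0,a^*]$ with $G\ge4\pi$ a.e., $\beta>0$, $P(a)=aG(a)$, and let $f_1>0$ be an eigenfunction associated with $\kappa=\kappa_1(G,\beta)$. Let $X:=f_1$ and let $Y$ be the absolutely continuous representative of the quasi-derivative $Pf_1'$. If $\kappa<\beta$, then \[|Y(a)|^2-\beta^2a^2|X(a)|^2<0\quad\text{for all }a\in\,]0,a^*[.\]
   Context: $\kappa_1(G,\beta)$ is the lowest eigenvalue of the weak Sturm–Liouville problem $-(Pf')'+\beta^2Qf=\kappa f$ on $]0,a^*[$, $\lim_{a\to0}Pf'=0$, $P(a^* )f'(a^* )=0$, with $P(a)=aG(a)$, $Q(a)=a/G(a)$ (weak sense: $f\in\mathcal F_{4\pi}$, $\int(Pf'\overline{\varphi'}+\beta^2Qf\overline\varphi)=\kappa\int f\overline\varphi$ for all $\varphi\in\mathcal F_{4\pi}$, where $\mathcal F_{4\pi}$ is the set of $f\in L^2(]0,a^*[)$ with $\int_0^{a^*}a|f'|^2<\infty$); equivalently the minimum of $\int(P|f'|^2+\beta^2Q|f|^2)/\int|f|^2$ over $\mathcal F_{4\pi}\setminus\{0\}$. The eigenfunction $f_1$ is locally absolutely continuous on $]0,a^*]$ and $Pf_1'$ is absolutely continuous on $[0,a^*]$. *)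

theory Defs
  imports "HOL-Analysis.Analysis"
begin

definition abs_cont_on :: "real set \<Rightarrow> (real \<Rightarrow> real) \<Rightarrow> bool" where
  "abs_cont_on S f \<longleftrightarrow>
     (\<forall>e>0. \<exists>d>0. \<forall>(n::nat) (l::nat \<Rightarrow> real) (r::nat \<Rightarrow> real).
        (\<forall>i<n. l i \<le> r i \<and> {l i..r i} \<subseteq> S) \<and>
        (\<forall>i<n. \<forall>j<n. i \<noteq> j \<longrightarrow> r i \<le> l j \<or> r j \<le> l i) \<and>
        (\<Sum>i<n. r i - l i) < d
        \<longrightarrow> (\<Sum>i<n. \<bar>f (r i) - f (l i)\<bar>) < e)"

definition has_weak_deriv :: "real \<Rightarrow> (real \<Rightarrow> complex) \<Rightarrow> (real \<Rightarrow> complex) \<Rightarrow> bool" where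
  "has_weak_deriv as f f' \<longleftrightarrow>
     (\<exists>g. (AE x in lebesgue. x \<in> {0<..<as} \<longrightarrow> f x = g x) \<and>
          (\<forall>x\<in>{0<..<as}. \<forall>y\<in>{0<..<as}. x \<le> y \<longrightarrow>
              set_integrable lebesgue {x..y} f' \<and>
              g y - g x = (LINT t:{x..y}|lebesgue. f' t)))"

definition inF :: "real \<Rightarrow> (real \<Rightarrow> complex) \<Rightarrow> (real \<Rightarrow> complex) \<Rightarrow> bool" where
  "inF as f f' \<longleftrightarrow> has_weak_deriv as f f' \<and>
     set_integrable lebesgue {0<..<as} (\<lambda>x. (cmod (f x))\<^sup>2) \<and>
     set_integrable lebesgue {0<..<as} (\<lambda>x. x * (cmod (f' x))\<^sup>2)"

definition Pfun :: "(real \<Rightarrow> real) \<Rightarrow> real \<Rightarrow> real" where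
  "Pfun G a = a * G a"

definition Qfun :: "(real \<Rightarrow> real) \<Rightarrow> real \<Rightarrow> real" where
  "Qfun G a = a / G a"

text \<open>(f, f') is a weak eigenfunction (f nonzero in L^2) with eigenvalue kappa of
  -(P f')' + beta^2 Q f = kappa f on ]0,as[.\<close>
definition weak_eigen ::
  "(real \<Rightarrow> real) \<Rightarrow> real \<Rightarrow> real \<Rightarrow> real \<Rightarrow> (real \<Rightarrow> complex) \<Rightarrow> (real \<Rightarrow> complex) \<Rightarrow> bool" where
  "weak_eigen G \<beta> as \<kappa> f f' \<longleftrightarrow>
     inF as f f' \<and>
     (LINT x:{0<..<as}|lebesgue. (cmod (f x))\<^sup>2) > 0 \<and>
     (\<forall>\<phi> \<phi>'. inF as \<phi> \<phi>' \<longrightarrow>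
        (LINT x:{0<..<as}|lebesgue.
            complex_of_real (Pfun G x) * f' x * cnj (\<phi>' x)
          + complex_of_real (\<beta>\<^sup>2 * Qfun G x) * f x * cnj (\<phi> x))
        = complex_of_real \<kappa> * (LINT x:{0<..<as}|lebesgue. f x * cnj (\<phi> x)))"

definition kappa1 :: "(real \<Rightarrow> real) \<Rightarrow> real \<Rightarrow> real \<Rightarrow> real" where
  "kappa1 G \<beta> as = Inf {\<kappa>. \<exists>f f'. weak_eigen G \<beta> as \<kappa> f f'}"

end

theory Submission
  imports Defs
begin

text \<open>With \<open>X = f1\<close> and \<open>Y = P f1'\<close>, the weak eigen equation tested against piecewise-linear
  cut-offs gives \<open>Y(a) = \<integral>\<^sub>0\<^sup>a (\<beta>\<^sup>2 Q - \<kappa>) X\<close>, while \<open>X' = Y / (a G)\<close>. For \<open>\<epsilon> = \<plusminus>1\<close> the function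
  \<open>\<epsilon> Y - \<beta> a X\<close> has derivative \<open>-(\<beta> + \<epsilon> \<kappa>) X < 0\<close> wherever it vanishes (here \<open>\<kappa> < \<beta>\<close> is
  used), so if \<open>\<bar>Y\<bar> \<ge> \<beta> a X\<close> held at one point it would hold, with the same sign, on the whole
  interval to its left. Near \<open>0\<close> both signs are impossible: \<open>Y \<ge> \<beta> a X\<close> makes \<open>X\<close> increasing
  and then \<open>Y = O(a\<^sup>2 X)\<close>, while \<open>Y \<le> -\<beta> a X\<close> gives \<open>\<beta> a X(a) \<le> \<kappa> \<integral>\<^sub>0\<^sup>a X\<close>, which iterated on a
  bound \<open>X \<le> C a\<^sup>-\<^sup>p\<close> forces \<open>X = 0\<close>.\<close>

lemma abs_cont_on_imp_continuous_on:
  assumes "abs_cont_on S f" "is_interval S"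
  shows "continuous_on S f"
  unfolding continuous_on_iff
proof (intro ballI allI impI)
  fix x e assume x: "x \<in> S" and e: "(0::real) < e"
  obtain d where d: "d > 0" and small_var: "\<forall>(n::nat) (l::nat \<Rightarrow> real) (r::nat \<Rightarrow> real).
        (\<forall>i<n. l i \<le> r i \<and> {l i..r i} \<subseteq> S) \<and>
        (\<forall>i<n. \<forall>j<n. i \<noteq> j \<longrightarrow> r i \<le> l j \<or> r j \<le> l i) \<and> (\<Sum>i<n. r i - l i) < d
        \<longrightarrow> (\<Sum>i<n. \<bar>f (r i) - f (l i)\<bar>) < e"
    using assms(1) e unfolding abs_cont_on_def by blast
  show "\<exists>d>0. \<forall>y\<in>S. dist y x < d \<longrightarrow> dist (f y) (f x) < e"
  proof (intro exI[of _ d] conjI ballI impI d)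
    fix y assume y: "y \<in> S" "dist y x < d"
    have "{min x y..max x y} \<subseteq> S"
    proof
      fix z assume "z \<in> {min x y..max x y}"
      then show "z \<in> S"
        using mem_is_interval_1_I[OF assms(2) x y(1)] mem_is_interval_1_I[OF assms(2) y(1) x]
        by (cases "x \<le> y") (simp_all add: min_def max_def)
    qed
    then have "\<forall>i<(1::nat). min x y \<le> max x y \<and> {min x y..max x y} \<subseteq> S"
      by simp
    moreover have "\<forall>i<(1::nat). \<forall>j<(1::nat). i \<noteq> j \<longrightarrow> max x y \<le> min x y"
      by auto
    moreover have "(\<Sum>i<(1::nat). max x y - min x y) < d"
      using y(2) by (simp add: dist_real_def abs_real_def max_def min_def split: if_splits)
    ultimately have "(\<Sum>i<(1::nat). \<bar>f (max x y) - f (min x y)\<bar>) < e"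
      using small_var[rule_format, of 1 "\<lambda>_. min x y" "\<lambda>_. max x y"] by blast
    then show "dist (f y) (f x) < e"
      by (cases "x \<le> y") (auto simp: dist_real_def abs_minus_commute max_def min_def)
  qed
qed

lemma first_zero_after_negative:
  fixes W :: "real \<Rightarrow> real"
  assumes "continuous_on {a..b} W" "a \<le> b" "W a < 0" "0 \<le> W b"
  obtains s where "a < s" "s \<le> b" "W s = 0" "\<And>t. a \<le> t \<Longrightarrow> t < s \<Longrightarrow> W t < 0"
proof -
  define Z where "Z = {a..b} \<inter> W -` {0}"
  have "closed Z"
    unfolding Z_def by (rule continuous_closed_preimage[OF assms(1)]) auto
  moreover have "Z \<noteq> {}"
    using IVT'[of W a 0 b] assms unfolding Z_def by auto
  moreover have Z_below: "bdd_below Z"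
    unfolding Z_def by (rule bdd_belowI[of _ a]) auto
  ultimately have "Inf Z \<in> Z"
    using closed_contains_Inf by blast
  then have s: "a \<le> Inf Z" "Inf Z \<le> b" "W (Inf Z) = 0"
    unfolding Z_def by auto
  have before: "W t < 0" if t: "a \<le> t" "t < Inf Z" for t
  proof (rule ccontr)
    assume "\<not> W t < 0"
    moreover have "continuous_on {a..t} W"
      using t s by (intro continuous_on_subset[OF assms(1)]) auto
    ultimately obtain r where "a \<le> r" "r \<le> t" "W r = 0"
      using IVT'[of W a 0 t] assms(3) t(1) by auto
    then have "r \<in> Z"
      using t s unfolding Z_def by auto
    then show False
      using cInf_lower[OF _ Z_below] \<open>r \<le> t\<close> t(2) by fastforce
  qed
  have "a \<noteq> Inf Z"
    using s(3) assms(3) by auto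
  then show ?thesis
    using that[of "Inf Z"] s before by simp
qed

lemma integral_le_off_negligible:
  fixes f g :: "'a::euclidean_space \<Rightarrow> real"
  assumes "f integrable_on S" "g integrable_on S" "negligible N"
    and "\<And>x. x \<in> S \<Longrightarrow> x \<notin> N \<Longrightarrow> f x \<le> g x"
  shows "integral S f \<le> integral S g"
proof -
  define h where "h x = (if x \<in> N then g x else f x)" for x
  have "integral S h = integral S f"
    by (rule integral_spike[OF assms(3)]) (auto simp: h_def)
  moreover have "h integrable_on S"
    by (rule integrable_spike[OF assms(1,3)]) (auto simp: h_def)
  then have "integral S h \<le> integral S g"
    by (rule integral_le[OF _ assms(2)]) (use assms(4) in \<open>auto simp: h_def\<close>)
  ultimately show ?thesis
    by simp
qed

lemma set_lebesgue_integral_eq_integral_spike: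
  fixes f g :: "'a::euclidean_space \<Rightarrow> real"
  assumes "g absolutely_integrable_on S" "negligible N" "\<And>x. x \<in> S - N \<Longrightarrow> f x = g x"
  shows "(LINT x:S|lebesgue. f x) = integral S g"
proof -
  have "f absolutely_integrable_on S"
    by (rule absolutely_integrable_spike[OF assms])
  then have "(LINT x:S|lebesgue. f x) = integral S f"
    by (rule set_lebesgue_integral_eq_integral(2))
  also have "\<dots> = integral S g"
    by (rule integral_spike[OF assms(2)]) (use assms(3) in auto)
  finally show ?thesis .
qed

lemma set_integrable_complex_of_real:
  "set_integrable M A f \<Longrightarrow> set_integrable M A (\<lambda>t. complex_of_real (f t))"
  unfolding set_integrable_def
  by (simp add: scaleR_conv_of_real flip: of_real_mult complex_of_real_integrable_eq)

lemma integral_average_tendsto_at_right: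
  fixes f :: "real \<Rightarrow> real"
  assumes "continuous_on {c..b} f" "c < b"
  shows "((\<lambda>y. integral {c..y} f / (y - c)) \<longlongrightarrow> f c) (at_right c)"
proof -
  have "((\<lambda>y. integral {c..y} f) has_real_derivative f c) (at c within {c..b})"
    by (rule integral_has_real_derivative) (use assms in auto)
  then have "((\<lambda>y. (integral {c..y} f - integral {c..c} f) / (y - c)) \<longlongrightarrow> f c) (at c within {c..b})"
    by (simp add: has_field_derivative_iff)
  then show ?thesis
    using at_within_Icc_at_right[OF assms(2)] by simp
qed

lemma one_le_powr_mult_powr_neg:
  fixes v a p :: real
  assumes "0 < v" "v \<le> a" "0 \<le> p"
  shows "1 \<le> a powr p * v powr (-p)"
proof -
  have "(a / v) powr p = a powr p / v powr p"
    by (rule powr_divide)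
  then have "a powr p * v powr (-p) = (a / v) powr p"
    by (simp add: powr_minus divide_inverse)
  moreover have "1 \<le> (a / v) powr p"
    using assms by (intro ge_one_powr_ge_zero) auto
  ultimately show ?thesis
    by simp
qed

lemma has_integral_powr_neg:
  fixes u b p :: real
  assumes "0 < u" "u \<le> b" "0 < p"
  shows "((\<lambda>v. v powr (-p-1)) has_integral ((u powr (-p) - b powr (-p)) / p)) {u..b}"
proof -
  have "((\<lambda>v. v powr (-p-1)) has_integral (- (b powr (-p)) / p - - (u powr (-p)) / p)) {u..b}"
  proof (rule fundamental_theorem_of_calculus[OF assms(2)])
    fix x assume "x \<in> {u..b}"
    then have "((\<lambda>v. - (v powr (-p)) / p) has_real_derivative (- ((-p) * x powr (-p - 1)) / p)) (at x)"
      using assms by (intro DERIV_cdivide DERIV_minus has_real_derivative_powr) auto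
    then show "((\<lambda>v. - (v powr (-p)) / p) has_vector_derivative x powr (-p-1)) (at x within {u..b})"
      using assms by (simp add: has_real_derivative_iff_has_vector_derivative has_vector_derivative_at_within)
  qed
  then show ?thesis
    by (simp add: field_simps diff_divide_distrib)
qed

definition ramp :: "real \<Rightarrow> real \<Rightarrow> real \<Rightarrow> real" where
  "ramp c x t = min 1 (max 0 ((x - t) / (x - c)))"

definition ramp' :: "real \<Rightarrow> real \<Rightarrow> real \<Rightarrow> real" where
  "ramp' c x t = (if t \<in> {c..x} then -1 / (x - c) else 0)"

lemma continuous_on_ramp: "c < x \<Longrightarrow> continuous_on S (ramp c x)"
  unfolding ramp_def[abs_def] by (intro continuous_intros) auto

lemma ramp_bounds: "0 \<le> ramp c x t" "ramp c x t \<le> 1"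
  unfolding ramp_def by auto

lemma ramp_left: "c < x \<Longrightarrow> t \<le> c \<Longrightarrow> ramp c x t = 1"
  unfolding ramp_def by (auto simp: field_simps)

lemma ramp_right: "c < x \<Longrightarrow> x \<le> t \<Longrightarrow> ramp c x t = 0"
  unfolding ramp_def by (auto simp: field_simps)

lemma has_real_derivative_ramp:
  assumes "c < x" "t \<notin> {c, x}"
  shows "(ramp c x has_real_derivative ramp' c x t) (at t)"
proof -
  consider "t < c" | "c < t" "t < x" | "x < t"
    using assms by force
  then show ?thesis
  proof cases
    case 1
    have "((\<lambda>_. 1) has_real_derivative ramp' c x t) (at t)"
      using 1 by (simp add: ramp'_def)
    then show ?thesis
      by (rule has_field_derivative_transform_within_open[where S="{..<c}"])
         (use 1 assms in \<open>auto simp: ramp_left\<close>)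
  next
    case 2
    have "((\<lambda>s. (x - s) / (x - c)) has_real_derivative ((0 - 1) / (x - c))) (at t)"
      by (intro DERIV_cdivide DERIV_diff DERIV_const DERIV_ident)
    then have "((\<lambda>s. (x - s) / (x - c)) has_real_derivative ramp' c x t) (at t)"
      using 2 by (simp add: ramp'_def)
    then show ?thesis
      by (rule has_field_derivative_transform_within_open[where S="{c<..<x}"])
         (use 2 in \<open>auto simp: ramp_def field_simps\<close>)
  next
    case 3
    have "((\<lambda>_. 0) has_real_derivative ramp' c x t) (at t)"
      using 3 by (simp add: ramp'_def)
    then show ?thesis
      by (rule has_field_derivative_transform_within_open[where S="{x<..}"])
         (use 3 assms in \<open>auto simp: ramp_right\<close>)
  qed
qed

lemma has_integral_ramp':
  assumes "c < x" "u \<le> v"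
  shows "(ramp' c x has_integral (ramp c x v - ramp c x u)) {u..v}"
  by (rule fundamental_theorem_of_calculus_interior_strong[where S="{c,x}"])
     (use assms has_real_derivative_ramp continuous_on_ramp in
      \<open>auto simp: has_real_derivative_iff_has_vector_derivative\<close>)

lemma absolutely_integrable_ramp':
  assumes "c < x" "u \<le> v"
  shows "ramp' c x absolutely_integrable_on {u..v}"
proof -
  have "(\<lambda>t. - ramp' c x t) integrable_on {u..v}"
    using has_integral_ramp'[OF assms] by (intro integrable_neg) (auto simp: integrable_on_def)
  moreover have "0 \<le> - ramp' c x t" for t
    using assms by (simp add: ramp'_def)
  ultimately have "(\<lambda>t. - ramp' c x t) absolutely_integrable_on {u..v}"
    by (intro nonnegative_absolutely_integrable_1) auto
  then have "(\<lambda>t. (-1) * (- ramp' c x t)) absolutely_integrable_on {u..v}"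
    by (rule set_integrable_mult_right)
  then show ?thesis
    by simp
qed

lemma inF_ramp:
  assumes "c < x"
  shows "inF as (\<lambda>t. complex_of_real (ramp c x t)) (\<lambda>t. complex_of_real (ramp' c x t))"
  unfolding inF_def has_weak_deriv_def
proof (intro conjI)
  show "\<exists>g. (AE t in lebesgue. t \<in> {0<..<as} \<longrightarrow> complex_of_real (ramp c x t) = g t) \<and>
        (\<forall>u\<in>{0<..<as}. \<forall>v\<in>{0<..<as}. u \<le> v \<longrightarrow>
            set_integrable lebesgue {u..v} (\<lambda>t. complex_of_real (ramp' c x t)) \<and>
            g v - g u = (LINT t:{u..v}|lebesgue. complex_of_real (ramp' c x t)))"
  proof (intro exI[of _ "\<lambda>t. complex_of_real (ramp c x t)"] conjI ballI impI AE_I2)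
    fix u v :: real assume "u \<le> v"
    have ai: "ramp' c x absolutely_integrable_on {u..v}"
      using absolutely_integrable_ramp' assms \<open>u \<le> v\<close> by blast
    then show "set_integrable lebesgue {u..v} (\<lambda>t. complex_of_real (ramp' c x t))"
      by (rule set_integrable_complex_of_real)
    have "(LINT t:{u..v}|lebesgue. ramp' c x t) = ramp c x v - ramp c x u"
      using set_lebesgue_integral_eq_integral(2)[OF ai] has_integral_ramp'[OF assms \<open>u \<le> v\<close>]
      by (simp add: integral_unique)
    then show "complex_of_real (ramp c x v) - complex_of_real (ramp c x u) =
           (LINT t:{u..v}|lebesgue. complex_of_real (ramp' c x t))"
      by (simp add: set_integral_complex_of_real)
  qed auto
  have "(\<lambda>t. (ramp c x t)\<^sup>2) absolutely_integrable_on {0..as}"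
    using assms by (intro absolutely_integrable_continuous_real continuous_intros continuous_on_ramp)
  then have "(\<lambda>t. (ramp c x t)\<^sup>2) absolutely_integrable_on {0<..<as}"
    by (rule set_integrable_subset) auto
  then show "set_integrable lebesgue {0<..<as} (\<lambda>t. (cmod (complex_of_real (ramp c x t)))\<^sup>2)"
    by (simp add: power2_abs)
  have "(\<lambda>t. t / (x - c)\<^sup>2) absolutely_integrable_on {c..x}"
    using assms by (intro absolutely_integrable_continuous_real continuous_intros) auto
  then have "(\<lambda>t. if t \<in> {c..x} then t / (x - c)\<^sup>2 else 0) absolutely_integrable_on UNIV"
    by (rule absolutely_integrable_restrict_UNIV[THEN iffD2])
  then have "(\<lambda>t. if t \<in> {c..x} then t / (x - c)\<^sup>2 else 0) absolutely_integrable_on {0<..<as}"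
    by (rule set_integrable_subset) auto
  moreover have "(if t \<in> {c..x} then t / (x - c)\<^sup>2 else 0) = t * (cmod (complex_of_real (ramp' c x t)))\<^sup>2" for t
    by (simp add: ramp'_def power2_eq_square)
  ultimately show "set_integrable lebesgue {0<..<as} (\<lambda>t. t * (cmod (complex_of_real (ramp' c x t)))\<^sup>2)"
    by simp
qed

locale positive_eigenfunction =
  fixes G :: "real \<Rightarrow> real" and \<beta> as \<kappa> :: real and f1 f1' Y :: "real \<Rightarrow> real"
  assumes G_meas: "set_borel_measurable lebesgue {0..as} G"
    and G_ge: "AE a in lebesgue. a \<in> {0..as} \<longrightarrow> G a \<ge> 4 * pi"
    and beta_pos: "\<beta> > 0"
    and eigen: "weak_eigen G \<beta> as \<kappa> (\<lambda>a. complex_of_real (f1 a)) (\<lambda>a. complex_of_real (f1' a))"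
    and f1_pos: "\<forall>a\<in>{0<..<as}. f1 a > 0"
    and f1_locAC: "\<forall>x\<in>{0<..as}. \<forall>y\<in>{0<..as}. x \<le> y \<longrightarrow>
                     set_integrable lebesgue {x..y} f1' \<and>
                     f1 y - f1 x = (LINT t:{x..y}|lebesgue. f1' t)"
    and Y_ac: "abs_cont_on {0..as} Y"
    and Y_rep: "AE a in lebesgue. a \<in> {0<..<as} \<longrightarrow> Y a = Pfun G a * f1' a"
begin

text \<open>Off the null set \<open>exceptional\<close>, \<open>G = Gtrunc \<ge> 4\<pi>\<close> and \<open>f1' = Y / (t G)\<close>; the function
  \<open>Y_rhs = (\<beta>\<^sup>2 Q - \<kappa>) f1\<close> is the derivative of \<open>Y\<close>.\<close>

definition Gtrunc :: "real \<Rightarrow> real" where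
  "Gtrunc t = max (4 * pi) (G t)"

definition exceptional :: "real set" where
  "exceptional = {t \<in> {0<..<as}. \<not> (4 * pi \<le> G t \<and> Y t = Pfun G t * f1' t)}"

definition Y_rhs :: "real \<Rightarrow> real" where
  "Y_rhs t = (\<beta>\<^sup>2 * t / Gtrunc t - \<kappa>) * f1 t"

lemma negligible_exceptional: "negligible exceptional"
proof -
  have "AE t in lebesgue. t \<in> {0<..<as} \<longrightarrow> 4 * pi \<le> G t \<and> Y t = Pfun G t * f1' t"
    using G_ge Y_rep by eventually_elim auto
  then obtain N where "negligible N" "{t. \<not> (t \<in> {0<..<as} \<longrightarrow> 4 * pi \<le> G t \<and> Y t = Pfun G t * f1' t)} \<subseteq> N"
    unfolding eventually_ae_filter_negligible by blast
  moreover from this(2) have "exceptional \<subseteq> N"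
    unfolding exceptional_def by blast
  ultimately show ?thesis
    using negligible_subset by blast
qed

lemma Gtrunc_ge: "4 * pi \<le> Gtrunc t"
  unfolding Gtrunc_def by simp

lemma Gtrunc_pos: "0 < Gtrunc t"
  using Gtrunc_ge[of t] pi_gt_zero by linarith

lemma Gtrunc_eq: "t \<in> {0<..<as} - exceptional \<Longrightarrow> Gtrunc t = G t"
  unfolding Gtrunc_def exceptional_def by auto

lemma f1'_eq: "t \<in> {0<..<as} - exceptional \<Longrightarrow> f1' t = Y t / (t * Gtrunc t)"
  using Gtrunc_eq[of t] Gtrunc_pos[of t] unfolding exceptional_def by (auto simp: Pfun_def field_simps)

lemma coefficient_bounds:
  assumes "0 \<le> t"
  shows "0 \<le> \<beta>\<^sup>2 * t / Gtrunc t" "\<beta>\<^sup>2 * t / Gtrunc t \<le> \<beta>\<^sup>2 * t / (4 * pi)"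
proof -
  show "0 \<le> \<beta>\<^sup>2 * t / Gtrunc t"
    using assms Gtrunc_pos[of t] by simp
  show "\<beta>\<^sup>2 * t / Gtrunc t \<le> \<beta>\<^sup>2 * t / (4 * pi)"
    using assms Gtrunc_ge[of t] mult_pos_pos[OF pi_gt_zero Gtrunc_pos[of t]]
    by (intro divide_left_mono) auto
qed

lemma coefficient_measurable:
  assumes "S \<subseteq> {0..as}"
  shows "(\<lambda>t. \<beta>\<^sup>2 * t / Gtrunc t) \<in> borel_measurable (lebesgue_on S)"
proof -
  have "G \<in> borel_measurable (lebesgue_on {0..as})"
    using G_meas unfolding set_borel_measurable_def
    by (subst borel_measurable_restrict_space_iff) auto
  then have "(\<lambda>t. \<beta>\<^sup>2 * t / Gtrunc t) \<in> borel_measurable (lebesgue_on {0..as})"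
    unfolding Gtrunc_def[abs_def]
    by (intro borel_measurable_divide borel_measurable_times borel_measurable_max
        borel_measurable_const continuous_imp_measurable_on_sets_lebesgue[OF continuous_on_id]) auto
  then show ?thesis
    by (rule measurable_restrict_mono[OF _ assms])
qed

lemma coefficient_bounded:
  assumes "S \<subseteq> {0..as}"
  shows "bounded ((\<lambda>t. \<beta>\<^sup>2 * t / Gtrunc t) ` S)"
proof -
  have "\<bar>\<beta>\<^sup>2 * t / Gtrunc t\<bar> \<le> \<beta>\<^sup>2 * as / (4 * pi)" if "t \<in> S" for t
  proof -
    have t: "0 \<le> t" "t \<le> as"
      using that assms by auto
    have "\<beta>\<^sup>2 * t / (4 * pi) \<le> \<beta>\<^sup>2 * as / (4 * pi)"
      using t pi_gt_zero by (intro divide_right_mono mult_left_mono) auto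
    then show ?thesis
      using coefficient_bounds[OF t(1)] by linarith
  qed
  then show ?thesis
    unfolding bounded_iff by auto
qed

lemma f1_ftc:
  assumes "0 < x" "x \<le> y" "y \<le> as"
  shows "f1' integrable_on {x..y}" "f1 y - f1 x = integral {x..y} f1'"
proof -
  have "set_integrable lebesgue {x..y} f1'" "f1 y - f1 x = (LINT t:{x..y}|lebesgue. f1' t)"
    using f1_locAC assms by auto
  then show "f1' integrable_on {x..y}" "f1 y - f1 x = integral {x..y} f1'"
    using set_lebesgue_integral_eq_integral by auto
qed

lemma continuous_on_f1:
  assumes "0 < x" "x \<le> as"
  shows "continuous_on {x..as} f1"
proof -
  have "continuous_on {x..as} (\<lambda>t. f1 x + integral {x..t} f1')"
    using f1_ftc(1)[OF assms order.refl]
    by (intro continuous_on_add continuous_on_const indefinite_integral_continuous_1)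
  moreover have "f1 x + integral {x..t} f1' = f1 t" if "t \<in> {x..as}" for t
    using f1_ftc(2)[of x t] assms that by auto
  ultimately show ?thesis
    by (rule continuous_on_eq)
qed

lemma isCont_f1: "t \<in> {0<..<as} \<Longrightarrow> isCont f1 t"
  using continuous_on_f1[of "t/2"] by (intro continuous_on_interior) auto

lemma continuous_on_Y: "continuous_on {0..as} Y"
  by (rule abs_cont_on_imp_continuous_on[OF Y_ac is_interval_cc])

lemma isCont_Y: "t \<in> {0<..<as} \<Longrightarrow> isCont Y t"
  by (rule continuous_on_interior[OF continuous_on_Y]) auto

lemma eigen_equation_real:
  assumes "inF as (\<lambda>t. complex_of_real (\<phi> t)) (\<lambda>t. complex_of_real (\<phi>' t))"
  shows "(LINT t:{0<..<as}|lebesgue. Pfun G t * f1' t * \<phi>' t + \<beta>\<^sup>2 * Qfun G t * f1 t * \<phi> t)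
           = \<kappa> * (LINT t:{0<..<as}|lebesgue. f1 t * \<phi> t)"
proof -
  have "(CLINT t:{0<..<as}|lebesgue. complex_of_real (Pfun G t * f1' t * \<phi>' t + \<beta>\<^sup>2 * Qfun G t * f1 t * \<phi> t))
      = complex_of_real \<kappa> * (CLINT t:{0<..<as}|lebesgue. complex_of_real (f1 t * \<phi> t))"
    using eigen[unfolded weak_eigen_def, THEN conjunct2, THEN conjunct2, rule_format, OF assms]
    by (simp add: mult.assoc)
  then have "complex_of_real (LINT t:{0<..<as}|lebesgue. Pfun G t * f1' t * \<phi>' t + \<beta>\<^sup>2 * Qfun G t * f1 t * \<phi> t)
      = complex_of_real \<kappa> * complex_of_real (LINT t:{0<..<as}|lebesgue. f1 t * \<phi> t)"
    by (simp only: set_integral_complex_of_real)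
  then have "complex_of_real (LINT t:{0<..<as}|lebesgue. Pfun G t * f1' t * \<phi>' t + \<beta>\<^sup>2 * Qfun G t * f1 t * \<phi> t)
      = complex_of_real (\<kappa> * (LINT t:{0<..<as}|lebesgue. f1 t * \<phi> t))"
    by (simp only: of_real_mult)
  then show ?thesis
    by (rule of_real_eq_iff[THEN iffD1])
qed

lemma eigenvalue_nonneg: "0 \<le> \<kappa>"
proof -
  have "AE t in lebesgue. 0 \<le> indicator {0<..<as} t *\<^sub>R (Pfun G t * f1' t * f1' t + \<beta>\<^sup>2 * Qfun G t * f1 t * f1 t)"
    using G_ge
  proof eventually_elim
    case (elim t)
    show ?case
    proof (cases "t \<in> {0<..<as}")
      case True
      then have "0 < G t"
        using elim pi_gt_zero by (auto intro: less_le_trans[of 0 "4 * pi"])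
      then have "0 \<le> Pfun G t" "0 \<le> Qfun G t"
        using True by (auto simp: Pfun_def Qfun_def)
      then show ?thesis
        by (simp add: mult.assoc)
    qed simp
  qed
  then have "0 \<le> (LINT t:{0<..<as}|lebesgue. Pfun G t * f1' t * f1' t + \<beta>\<^sup>2 * Qfun G t * f1 t * f1 t)"
    unfolding set_lebesgue_integral_def by (rule integral_nonneg_AE)
  also have "\<dots> = \<kappa> * (LINT t:{0<..<as}|lebesgue. (f1 t)\<^sup>2)"
    using eigen_equation_real[of f1 f1'] eigen unfolding weak_eigen_def by (simp add: power2_eq_square)
  finally show ?thesis
    using eigen unfolding weak_eigen_def by (simp add: zero_le_mult_iff)
qed

lemma f1_absolutely_integrable: "f1 absolutely_integrable_on {0..as}"
proof -
  have "set_integrable lebesgue {0<..<as} (\<lambda>t. (f1 t)\<^sup>2)"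
    using eigen unfolding weak_eigen_def inF_def by simp
  then have "(\<lambda>t. 1 + (f1 t)\<^sup>2) integrable_on {0<..<as}"
    by (intro integrable_add set_lebesgue_integral_eq_integral(1))
       (auto simp: integrable_on_open_interval_real)
  moreover have "norm (f1 t) \<le> 1 + (f1 t)\<^sup>2" for t
    using sum_power2_ge_zero[of "\<bar>f1 t\<bar> - 1" 0] by (simp add: power2_eq_square algebra_simps)
  moreover have "continuous_on {0<..<as} f1"
    using isCont_f1 by (simp add: continuous_at_imp_continuous_on)
  ultimately have "f1 absolutely_integrable_on {0<..<as}"
    by (intro measurable_bounded_by_integrable_imp_absolutely_integrable[where g="\<lambda>t. 1 + (f1 t)\<^sup>2"]
         continuous_imp_measurable_on_sets_lebesgue) auto
  then show ?thesis
    using absolutely_integrable_on_open_interval[where f=f1 and a=0 and b=as] by simp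
qed

lemma Y_rhs_absolutely_integrable: "Y_rhs absolutely_integrable_on {0..as}"
proof -
  have "(\<lambda>t. \<beta>\<^sup>2 * t / Gtrunc t * f1 t) absolutely_integrable_on {0..as}"
    by (intro absolutely_integrable_bounded_measurable_product_real f1_absolutely_integrable
        coefficient_measurable coefficient_bounded) auto
  moreover have "(\<lambda>t. \<kappa> * f1 t) absolutely_integrable_on {0..as}"
    by (rule set_integrable_mult_right[OF f1_absolutely_integrable])
  ultimately have "(\<lambda>t. \<beta>\<^sup>2 * t / Gtrunc t * f1 t - \<kappa> * f1 t) absolutely_integrable_on {0..as}"
    by (rule set_integral_diff(1))
  then show ?thesis
    unfolding Y_rhs_def[abs_def] by (simp add: algebra_simps)
qed

lemma Y_rhs_integrable: "0 \<le> x \<Longrightarrow> y \<le> as \<Longrightarrow> Y_rhs integrable_on {x..y}"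
  using integrable_on_subinterval[OF set_lebesgue_integral_eq_integral(1)[OF Y_rhs_absolutely_integrable]]
  by (cases "x \<le> y") auto

lemma f1_ramp_absolutely_integrable:
  assumes "c < x"
  shows "(\<lambda>t. ramp c x t * f1 t) absolutely_integrable_on {0..as}"
  using assms ramp_bounds
  by (intro absolutely_integrable_bounded_measurable_product_real f1_absolutely_integrable
      continuous_imp_measurable_on_sets_lebesgue continuous_on_ramp)
     (auto simp: bounded_iff intro!: exI[of _ 1])

lemma Y_rhs_ramp_absolutely_integrable:
  assumes "c < x"
  shows "(\<lambda>t. Y_rhs t * ramp c x t) absolutely_integrable_on {0..as}"
  using assms ramp_bounds
  by (subst mult.commute, intro absolutely_integrable_bounded_measurable_product_real
      Y_rhs_absolutely_integrable continuous_imp_measurable_on_sets_lebesgue continuous_on_ramp)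
     (auto simp: bounded_iff intro!: exI[of _ 1])

lemma Y_ramp'_absolutely_integrable:
  assumes "0 \<le> c" "c < x" "x \<le> as"
  shows "(\<lambda>t. Y t * ramp' c x t) absolutely_integrable_on {0..as}"
proof -
  have "(\<lambda>t. - Y t / (x - c)) absolutely_integrable_on {c..x}"
    using assms by (intro absolutely_integrable_continuous_real continuous_intros
        continuous_on_subset[OF continuous_on_Y]) auto
  then have "(\<lambda>t. if t \<in> {c..x} then - Y t / (x - c) else 0) absolutely_integrable_on UNIV"
    by (rule absolutely_integrable_restrict_UNIV[THEN iffD2])
  then have "(\<lambda>t. if t \<in> {c..x} then - Y t / (x - c) else 0) absolutely_integrable_on {0..as}"
    by (rule set_integrable_subset) auto
  then show ?thesis
    by (simp add: ramp'_def if_distrib cong: if_cong)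
qed

lemma integral_Y_ramp':
  assumes "0 \<le> c" "c < x" "x \<le> as"
  shows "integral {0..as} (\<lambda>t. Y t * ramp' c x t) = - (integral {c..x} Y / (x - c))"
proof -
  have "integral {0..as} (\<lambda>t. Y t * ramp' c x t)
      = integral {0..as} (\<lambda>t. if t \<in> {c..x} then - Y t / (x - c) else 0)"
    by (rule integral_cong) (simp add: ramp'_def)
  also have "\<dots> = integral ({c..x} \<inter> {0..as}) (\<lambda>t. - Y t / (x - c))"
    by (rule integral_restrict_Int)
  also have "{c..x} \<inter> {0..as} = {c..x}"
    using assms by auto
  finally show ?thesis
    by simp
qed

lemma integral_Y_rhs_ramp:
  assumes "0 \<le> c" "c < x" "x \<le> as"
  shows "integral {0..as} (\<lambda>t. Y_rhs t * ramp c x t)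
           = integral {0..c} Y_rhs + integral {c..x} (\<lambda>t. Y_rhs t * ramp c x t)"
proof -
  have int: "(\<lambda>t. Y_rhs t * ramp c x t) integrable_on {0..as}"
    using set_lebesgue_integral_eq_integral(1)[OF Y_rhs_ramp_absolutely_integrable[OF assms(2)]] .
  have "integral {0..as} (\<lambda>t. Y_rhs t * ramp c x t)
      = integral {0..c} (\<lambda>t. Y_rhs t * ramp c x t) + integral {c..x} (\<lambda>t. Y_rhs t * ramp c x t)
        + integral {x..as} (\<lambda>t. Y_rhs t * ramp c x t)"
    using assms integrable_on_subinterval[OF int]
    by (simp add: Henstock_Kurzweil_Integration.integral_combine)
  also have "integral {0..c} (\<lambda>t. Y_rhs t * ramp c x t) = integral {0..c} Y_rhs"
    by (rule integral_cong) (use assms ramp_left in auto)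
  also have "integral {x..as} (\<lambda>t. Y_rhs t * ramp c x t) = integral {x..as} (\<lambda>t. 0)"
    by (rule integral_cong) (use assms ramp_right in auto)
  finally show ?thesis
    by simp
qed

lemma weak_equation_ramp:
  assumes "0 < c" "c < x" "x < as"
  shows "integral {0..as} (\<lambda>t. Y t * ramp' c x t) = - integral {0..as} (\<lambda>t. Y_rhs t * ramp c x t)"
proof -
  define C where "C t = \<beta>\<^sup>2 * t / Gtrunc t * (ramp c x t * f1 t)" for t
  have C_ai: "C absolutely_integrable_on {0..as}"
    unfolding C_def
    by (intro absolutely_integrable_bounded_measurable_product_real f1_ramp_absolutely_integrable
        coefficient_measurable coefficient_bounded assms) auto
  have sum_ai: "(\<lambda>t. Y t * ramp' c x t + C t) absolutely_integrable_on {0<..<as}"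
    using assms
    by (intro set_integrable_subset[OF set_integral_add(1)[OF Y_ramp'_absolutely_integrable C_ai]]) auto
  have "(LINT t:{0<..<as}|lebesgue. Pfun G t * f1' t * ramp' c x t + \<beta>\<^sup>2 * Qfun G t * f1 t * ramp c x t)
      = integral {0<..<as} (\<lambda>t. Y t * ramp' c x t + C t)"
  proof (rule set_lebesgue_integral_eq_integral_spike[OF sum_ai negligible_exceptional])
    fix t assume "t \<in> {0<..<as} - exceptional"
    then show "Pfun G t * f1' t * ramp' c x t + \<beta>\<^sup>2 * Qfun G t * f1 t * ramp c x t = Y t * ramp' c x t + C t"
      using Gtrunc_eq[of t] unfolding exceptional_def C_def Qfun_def by auto
  qed
  moreover have "(LINT t:{0<..<as}|lebesgue. f1 t * ramp c x t) = integral {0<..<as} (\<lambda>t. ramp c x t * f1 t)"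
    using set_lebesgue_integral_eq_integral(2)[OF
        set_integrable_subset[OF f1_ramp_absolutely_integrable[OF assms(2)], of "{0<..<as}"]]
    by (force simp: mult.commute)
  ultimately have "integral {0<..<as} (\<lambda>t. Y t * ramp' c x t + C t)
      = \<kappa> * integral {0<..<as} (\<lambda>t. ramp c x t * f1 t)"
    using eigen_equation_real[OF inF_ramp[OF assms(2)]] by simp
  then have "integral {0..as} (\<lambda>t. Y t * ramp' c x t) + integral {0..as} C
      = \<kappa> * integral {0..as} (\<lambda>t. ramp c x t * f1 t)"
    using assms
    by (simp add: integral_open_interval_real[symmetric] integral_add
        set_lebesgue_integral_eq_integral(1)[OF Y_ramp'_absolutely_integrable]
        set_lebesgue_integral_eq_integral(1)[OF C_ai])
  moreover have "integral {0..as} (\<lambda>t. Y_rhs t * ramp c x t)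
      = integral {0..as} C - \<kappa> * integral {0..as} (\<lambda>t. ramp c x t * f1 t)"
  proof -
    have "integral {0..as} (\<lambda>t. Y_rhs t * ramp c x t)
        = integral {0..as} (\<lambda>t. C t - \<kappa> * (ramp c x t * f1 t))"
      by (rule integral_cong) (simp add: Y_rhs_def C_def algebra_simps)
    also have "\<dots> = integral {0..as} C - \<kappa> * integral {0..as} (\<lambda>t. ramp c x t * f1 t)"
      using integral_diff[OF set_lebesgue_integral_eq_integral(1)[OF C_ai]
          integrable_on_cmult_left[OF set_lebesgue_integral_eq_integral(1)[OF
            f1_ramp_absolutely_integrable[OF assms(2)]], of \<kappa>]]
      by simp
    finally show ?thesis .
  qed
  ultimately show ?thesis
    by linarith
qed

lemma integral_Y_rhs_ramp_tendsto_0: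
  assumes "0 < c" "c < as"
  shows "((\<lambda>x. integral {c..x} (\<lambda>t. Y_rhs t * ramp c x t)) \<longlongrightarrow> 0) (at_right c)"
proof -
  define H where "H x = integral {c..x} (\<lambda>t. \<bar>Y_rhs t\<bar>)" for x
  have abs_int: "(\<lambda>t. \<bar>Y_rhs t\<bar>) integrable_on {0..as}"
    using set_integrable_abs[OF Y_rhs_absolutely_integrable] set_lebesgue_integral_eq_integral(1)
    by blast
  have "continuous_on {c..as} H"
    unfolding H_def using assms
    by (intro indefinite_integral_continuous_1 integrable_on_subinterval[OF abs_int]) auto
  then have "(H \<longlongrightarrow> H c) (at c within {c..as})"
    using assms by (simp add: continuous_on_def)
  then have "(H \<longlongrightarrow> H c) (at_right c)"
    using at_within_Icc_at_right[OF assms(2)] by simp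
  then have H0: "(H \<longlongrightarrow> 0) (at_right c)"
    by (simp add: H_def)
  have "\<forall>\<^sub>F x in at_right c. norm (integral {c..x} (\<lambda>t. Y_rhs t * ramp c x t)) \<le> H x"
    using eventually_at_right_real[OF assms(2)]
  proof eventually_elim
    case (elim x)
    show ?case
      unfolding H_def
    proof (rule integral_norm_bound_integral)
      show "(\<lambda>t. Y_rhs t * ramp c x t) integrable_on {c..x}"
        using elim assms
        by (intro integrable_on_subinterval[OF set_lebesgue_integral_eq_integral(1)[OF
              Y_rhs_ramp_absolutely_integrable]]) auto
      show "(\<lambda>t. \<bar>Y_rhs t\<bar>) integrable_on {c..x}"
        using elim assms by (intro integrable_on_subinterval[OF abs_int]) auto
      show "norm (Y_rhs t * ramp c x t) \<le> \<bar>Y_rhs t\<bar>" for t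
        using ramp_bounds[of c x t] by (simp add: abs_mult mult_left_le)
    qed
  qed
  then show ?thesis
    by (rule Lim_null_comparison[OF _ H0])
qed

lemma Y_eq_integral:
  assumes "0 < c" "c < as"
  shows "Y c = integral {0..c} Y_rhs"
proof -
  have avg: "((\<lambda>x. integral {c..x} Y / (x - c)) \<longlongrightarrow> Y c) (at_right c)"
    using assms
    by (intro integral_average_tendsto_at_right continuous_on_subset[OF continuous_on_Y]) auto
  have "((\<lambda>x. integral {0..c} Y_rhs + integral {c..x} (\<lambda>t. Y_rhs t * ramp c x t))
      \<longlongrightarrow> integral {0..c} Y_rhs + 0) (at_right c)"
    by (intro tendsto_add tendsto_const integral_Y_rhs_ramp_tendsto_0 assms)
  moreover have "\<forall>\<^sub>F x in at_right c.
      integral {0..c} Y_rhs + integral {c..x} (\<lambda>t. Y_rhs t * ramp c x t) = integral {c..x} Y / (x - c)"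
    using eventually_at_right_real[OF assms(2)]
  proof eventually_elim
    case (elim x)
    then have cx: "0 < c" "c < x" "x < as"
      using assms by auto
    show ?case
      using weak_equation_ramp[OF cx] integral_Y_ramp'[of c x] integral_Y_rhs_ramp[of c x] cx
      by simp
  qed
  ultimately have "((\<lambda>x. integral {c..x} Y / (x - c)) \<longlongrightarrow> integral {0..c} Y_rhs) (at_right c)"
    by (simp add: Lim_transform_eventually)
  then show ?thesis
    using tendsto_unique[OF trivial_limit_at_right_real avg] by blast
qed

lemma Y_diff:
  assumes "0 < x" "x \<le> y" "y < as"
  shows "Y y - Y x = integral {x..y} Y_rhs"
proof -
  have "integral {0..x} Y_rhs + integral {x..y} Y_rhs = integral {0..y} Y_rhs"
    using assms Y_rhs_integrable[of 0 y] by (simp add: Henstock_Kurzweil_Integration.integral_combine)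
  then show ?thesis
    using Y_eq_integral[of x] Y_eq_integral[of y] assms by auto
qed

lemma Y_rhs_upper:
  assumes "0 < u" "u < as"
  shows "Y_rhs u \<le> \<beta>\<^sup>2 * u / (4 * pi) * f1 u"
proof -
  have "0 < f1 u"
    using f1_pos assms by auto
  then have "Y_rhs u \<le> \<beta>\<^sup>2 * u / Gtrunc u * f1 u"
    using eigenvalue_nonneg by (simp add: Y_rhs_def algebra_simps)
  also have "\<dots> \<le> \<beta>\<^sup>2 * u / (4 * pi) * f1 u"
    using coefficient_bounds(2)[of u] assms \<open>0 < f1 u\<close> by (intro mult_right_mono) auto
  finally show ?thesis .
qed

lemma Y_rhs_lower:
  assumes "0 < u" "u < as"
  shows "- (\<kappa> * f1 u) \<le> Y_rhs u"
proof -
  have "0 < f1 u"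
    using f1_pos assms by auto
  then have "0 \<le> \<beta>\<^sup>2 * u / Gtrunc u * f1 u"
    using coefficient_bounds(1)[of u] assms by (intro mult_nonneg_nonneg) auto
  then show ?thesis
    by (simp add: Y_rhs_def algebra_simps)
qed

text \<open>The discrete product rule \<open>s f1 s - t f1 t = s (f1 s - f1 t) + (s - t) f1 t\<close> avoids
  differentiating \<open>t f1 t\<close>.\<close>

lemma contact_difference:
  assumes "0 < t" "t \<le> s" "s < as"
  shows "(\<lambda>u. \<epsilon> * Y_rhs u - \<beta> * s * f1' u - \<beta> * f1 t) integrable_on {t..s}"
    and "(\<epsilon> * Y s - \<beta> * s * f1 s) - (\<epsilon> * Y t - \<beta> * t * f1 t)
           = integral {t..s} (\<lambda>u. \<epsilon> * Y_rhs u - \<beta> * s * f1' u - \<beta> * f1 t)"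
proof -
  have Yi: "(\<lambda>u. \<epsilon> * Y_rhs u) integrable_on {t..s}"
    using Y_rhs_integrable[of t s] assms by (intro integrable_on_mult_right) auto
  have fi: "(\<lambda>u. \<beta> * s * f1' u) integrable_on {t..s}"
    using f1_ftc(1)[of t s] assms by (intro integrable_on_mult_right) auto
  show "(\<lambda>u. \<epsilon> * Y_rhs u - \<beta> * s * f1' u - \<beta> * f1 t) integrable_on {t..s}"
    by (rule integrable_diff[OF integrable_diff[OF Yi fi] integrable_const_ivl])
  have "integral {t..s} (\<lambda>u. \<epsilon> * Y_rhs u - \<beta> * s * f1' u - \<beta> * f1 t)
      = integral {t..s} (\<lambda>u. \<epsilon> * Y_rhs u) - integral {t..s} (\<lambda>u. \<beta> * s * f1' u)
        - integral {t..s} (\<lambda>u. \<beta> * f1 t)"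
    by (simp add: integral_diff[OF integrable_diff[OF Yi fi] integrable_const_ivl] integral_diff[OF Yi fi])
  also have "\<dots> = \<epsilon> * integral {t..s} Y_rhs - \<beta> * s * integral {t..s} f1' - (s - t) * (\<beta> * f1 t)"
    using assms by simp
  also have "\<dots> = \<epsilon> * (Y s - Y t) - \<beta> * s * (f1 s - f1 t) - (s - t) * (\<beta> * f1 t)"
    using Y_diff[of t s] f1_ftc(2)[of t s] assms by simp
  finally show "(\<epsilon> * Y s - \<beta> * s * f1 s) - (\<epsilon> * Y t - \<beta> * t * f1 t)
           = integral {t..s} (\<lambda>u. \<epsilon> * Y_rhs u - \<beta> * s * f1' u - \<beta> * f1 t)"
    by (simp add: algebra_simps)
qed

lemma scaled_by_Gtrunc_le:
  assumes "0 < s" "s / 2 \<le> u" "z \<le> pi * s * M / (2 * \<beta>)" "0 \<le> M"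
  shows "\<beta> / (u * Gtrunc u) * z \<le> M / 4"
proof -
  have uG: "0 < u * Gtrunc u"
    using assms Gtrunc_pos[of u] by simp
  have "s / 2 * (4 * pi) \<le> u * Gtrunc u"
    using assms Gtrunc_ge[of u] pi_gt_zero by (intro mult_mono) auto
  moreover have "0 < u * Gtrunc u * (s / 2 * (4 * pi))"
    by (rule mult_pos_pos[OF uG]) (use assms in simp)
  ultimately have coeff: "\<beta> / (u * Gtrunc u) \<le> \<beta> / (s / 2 * (4 * pi))"
    using beta_pos by (intro divide_left_mono) auto
  have "\<beta> / (u * Gtrunc u) * z \<le> \<beta> / (u * Gtrunc u) * (pi * s * M / (2 * \<beta>))"
    using assms uG beta_pos by (intro mult_left_mono) auto
  also have "\<dots> \<le> \<beta> / (s / 2 * (4 * pi)) * (pi * s * M / (2 * \<beta>))"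
    using coeff assms beta_pos by (intro mult_right_mono) auto
  also have "\<dots> = M / 4"
    using assms beta_pos pi_gt_zero by (simp add: field_simps)
  finally show ?thesis .
qed

lemma contact_integrand_bound:
  assumes "\<epsilon> \<in> {-1, 1}" "0 < \<beta> + \<epsilon> * \<kappa>" "0 < s" "s < as" "\<epsilon> * Y s = \<beta> * s * f1 s"
  obtains d where "0 < d"
    "\<And>t u. s - d < t \<Longrightarrow> s / 2 \<le> t \<Longrightarrow> u \<in> {t..s} - exceptional \<Longrightarrow>
      \<epsilon> * Y_rhs u - \<beta> * s * f1' u - \<beta> * f1 t \<le> - ((\<beta> + \<epsilon> * \<kappa>) * f1 s / 2)"
proof -
  define m where "m = (\<beta> + \<epsilon> * \<kappa>) * f1 s"
  have m: "0 < m"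
    using assms f1_pos by (simp add: m_def)
  have \<kappa>: "0 \<le> \<kappa>" "\<bar>\<epsilon> * \<kappa>\<bar> = \<kappa>"
    using eigenvalue_nonneg assms(1) by auto
  obtain \<eta> where \<eta>: "0 < \<eta>" "\<kappa> * \<eta> + \<beta> * \<eta> = m / 4"
  proof
    define B where "B = \<beta> + \<kappa>"
    have "0 < B"
      using beta_pos \<kappa> by (simp add: B_def)
    then show "0 < m / (4 * B)" "\<kappa> * (m / (4 * B)) + \<beta> * (m / (4 * B)) = m / 4"
      using m by (simp_all add: field_simps) (simp add: B_def algebra_simps)
  qed
  define Z where "Z u = \<epsilon> * \<beta> * u\<^sup>2 * f1 u - s * Y u" for u
  have "Z s = \<epsilon> * s * (\<beta> * s * f1 s - \<epsilon> * Y s)"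
    using assms(1) by (auto simp: Z_def power2_eq_square algebra_simps)
  then have "Z s = 0"
    using assms(5) by simp
  moreover have "isCont Z s"
    unfolding Z_def using assms by (intro continuous_intros isCont_f1 isCont_Y) auto
  moreover have "0 < pi * s * m / (2 * \<beta>)"
    using m assms beta_pos by simp
  ultimately have "\<exists>d>0. \<forall>u. \<bar>u - s\<bar> < d \<longrightarrow> \<bar>Z u\<bar> < pi * s * m / (2 * \<beta>)"
    unfolding continuous_at_eps_delta dist_real_def by fastforce
  then obtain d1 where d1: "0 < d1" "\<And>u. \<bar>u - s\<bar> < d1 \<Longrightarrow> \<bar>Z u\<bar> < pi * s * m / (2 * \<beta>)"
    by blast
  have "\<exists>d>0. \<forall>u. \<bar>u - s\<bar> < d \<longrightarrow> \<bar>f1 u - f1 s\<bar> < \<eta>"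
    using isCont_f1[of s] assms \<eta>(1) unfolding continuous_at_eps_delta dist_real_def by fastforce
  then obtain d2 where d2: "0 < d2" "\<And>u. \<bar>u - s\<bar> < d2 \<Longrightarrow> \<bar>f1 u - f1 s\<bar> < \<eta>"
    by blast
  have "\<epsilon> * Y_rhs u - \<beta> * s * f1' u - \<beta> * f1 t \<le> - (m / 2)"
    if t: "s - min d1 d2 < t" "s / 2 \<le> t" and u: "u \<in> {t..s} - exceptional" for t u
  proof -
    have u0: "0 < u" "u < as" "s / 2 \<le> u" "\<bar>u - s\<bar> < d1" "\<bar>u - s\<bar> < d2" "\<bar>t - s\<bar> < d2"
      using t u assms by auto
    have "u \<noteq> 0" "Gtrunc u \<noteq> 0"
      using u0 Gtrunc_pos[of u] by auto
    then have "\<epsilon> * Y_rhs u - \<beta> * s * f1' u - \<beta> * f1 t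
        = \<beta> / (u * Gtrunc u) * Z u - \<epsilon> * \<kappa> * f1 u - \<beta> * f1 t"
      using f1'_eq[of u] u0 u by (simp add: Y_rhs_def Z_def field_simps power2_eq_square)
    moreover have "\<beta> / (u * Gtrunc u) * Z u \<le> m / 4"
      using d1(2)[OF u0(4)] u0 m assms by (intro scaled_by_Gtrunc_le) auto
    moreover have "\<bar>\<epsilon> * \<kappa> * f1 u - \<epsilon> * \<kappa> * f1 s\<bar> \<le> \<kappa> * \<eta>"
    proof -
      have "\<bar>\<epsilon> * \<kappa> * f1 u - \<epsilon> * \<kappa> * f1 s\<bar> = \<kappa> * \<bar>f1 u - f1 s\<bar>"
        using \<kappa>(2) by (simp add: abs_mult flip: right_diff_distrib)
      also have "\<dots> \<le> \<kappa> * \<eta>"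
        using d2(2)[OF u0(5)] \<kappa>(1) by (intro mult_left_mono) auto
      finally show ?thesis .
    qed
    moreover have "\<bar>\<beta> * f1 t - \<beta> * f1 s\<bar> \<le> \<beta> * \<eta>"
      using d2(2)[OF u0(6)] beta_pos by (simp add: abs_mult flip: right_diff_distrib)
    moreover have "m = \<beta> * f1 s + \<epsilon> * \<kappa> * f1 s"
      by (simp add: m_def algebra_simps)
    ultimately show ?thesis
      using \<eta>(2) by linarith
  qed
  then show ?thesis
    using d1(1) d2(1) by (intro that[of "min d1 d2"]) (auto simp: m_def)
qed

lemma contact_eventually_at_left:
  assumes "\<epsilon> \<in> {-1, 1}" "0 < \<beta> + \<epsilon> * \<kappa>" "0 < s" "s < as" "\<epsilon> * Y s = \<beta> * s * f1 s"
  shows "\<forall>\<^sub>F t in at_left s. \<beta> * t * f1 t < \<epsilon> * Y t"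
proof -
  obtain d where d: "0 < d"
    "\<And>t u. s - d < t \<Longrightarrow> s / 2 \<le> t \<Longrightarrow> u \<in> {t..s} - exceptional \<Longrightarrow>
      \<epsilon> * Y_rhs u - \<beta> * s * f1' u - \<beta> * f1 t \<le> - ((\<beta> + \<epsilon> * \<kappa>) * f1 s / 2)"
    using contact_integrand_bound[OF assms] by blast
  have "0 < (\<beta> + \<epsilon> * \<kappa>) * f1 s"
    using assms f1_pos by simp
  have above: "\<beta> * t * f1 t < \<epsilon> * Y t" if t: "t \<in> {max (s / 2) (s - d)<..<s}" for t
  proof -
    have t0: "0 < t" "t < s" "s - d < t" "s / 2 \<le> t"
      using t assms by auto
    have "(\<epsilon> * Y s - \<beta> * s * f1 s) - (\<epsilon> * Y t - \<beta> * t * f1 t)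
        = integral {t..s} (\<lambda>u. \<epsilon> * Y_rhs u - \<beta> * s * f1' u - \<beta> * f1 t)"
      using t0 assms by (intro contact_difference) auto
    also have "\<dots> \<le> integral {t..s} (\<lambda>u. - ((\<beta> + \<epsilon> * \<kappa>) * f1 s / 2))"
    proof (rule integral_le_off_negligible[OF _ _ negligible_exceptional])
      show "(\<lambda>u. \<epsilon> * Y_rhs u - \<beta> * s * f1' u - \<beta> * f1 t) integrable_on {t..s}"
        using t0 assms by (intro contact_difference) auto
    qed (use d(2) t0 in auto)
    also have "\<dots> = - ((s - t) * ((\<beta> + \<epsilon> * \<kappa>) * f1 s) / 2)"
      using t0 by simp
    also have "\<dots> < 0"
      using mult_pos_pos[OF _ \<open>0 < (\<beta> + \<epsilon> * \<kappa>) * f1 s\<close>, of "s - t"] t0 by simp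
    finally show ?thesis
      using assms(5) by simp
  qed
  have "max (s / 2) (s - d) < s"
    using assms d(1) by simp
  then have "\<forall>\<^sub>F t in at_left s. t \<in> {max (s / 2) (s - d)<..<s}"
    by (rule eventually_at_left_real)
  then show ?thesis
    by (rule eventually_mono) (rule above)
qed

lemma contact_barrier:
  assumes "\<epsilon> \<in> {-1, 1}" "0 < \<beta> + \<epsilon> * \<kappa>" "0 < t" "t \<le> a" "a < as" "\<beta> * a * f1 a \<le> \<epsilon> * Y a"
  shows "\<beta> * t * f1 t \<le> \<epsilon> * Y t"
proof (rule ccontr)
  assume below: "\<not> ?thesis"
  define W where "W u = \<epsilon> * Y u - \<beta> * u * f1 u" for u
  have "continuous_on {t..a} W"
    unfolding W_def using assms
    by (intro continuous_intros continuous_on_subset[OF continuous_on_Y]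
        continuous_on_subset[OF continuous_on_f1[of t]]) auto
  moreover have "W t < 0" "0 \<le> W a"
    using below assms(6) by (auto simp: W_def)
  ultimately obtain s where s: "t < s" "s \<le> a" "W s = 0" "\<And>u. t \<le> u \<Longrightarrow> u < s \<Longrightarrow> W u < 0"
    using first_zero_after_negative[of t a W] assms(4) by blast
  have "\<forall>\<^sub>F u in at_left s. \<beta> * u * f1 u < \<epsilon> * Y u"
    using s assms by (intro contact_eventually_at_left) (auto simp: W_def)
  moreover have "\<forall>\<^sub>F u in at_left s. u \<in> {t<..<s}"
    using s(1) by (rule eventually_at_left_real)
  ultimately have "\<forall>\<^sub>F u in at_left s. False"
  proof eventually_elim
    case (elim u)
    then show ?case
      using s(4)[of u] by (simp add: W_def)
  qed
  then show False
    by (simp add: trivial_limit_at_left_real)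
qed

lemma f1_mono_where_Y_nonneg:
  assumes "0 < x" "x \<le> y" "y < as" "\<And>u. u \<in> {x..y} \<Longrightarrow> 0 \<le> Y u"
  shows "f1 x \<le> f1 y"
proof -
  have "integral {x..y} (\<lambda>_. 0) \<le> integral {x..y} f1'"
  proof (rule integral_le_off_negligible[OF _ f1_ftc(1) negligible_exceptional])
    fix u assume "u \<in> {x..y}" "u \<notin> exceptional"
    then show "0 \<le> f1' u"
      using f1'_eq[of u] assms(1,3) assms(4)[of u] Gtrunc_pos[of u] by auto
  qed (use assms in auto)
  then show ?thesis
    using f1_ftc(2)[of x y] assms by simp
qed

lemma not_above_near_zero:
  assumes "0 < a" "a < as" "\<And>t. 0 < t \<Longrightarrow> t \<le> a \<Longrightarrow> \<beta> * t * f1 t \<le> Y t"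
  shows False
proof -
  define t where "t = min a (2 * pi / \<beta>)"
  have t: "0 < t" "t \<le> a" "\<beta> * t \<le> 2 * pi"
    using assms beta_pos pi_gt_zero by (auto simp: t_def min_def field_simps)
  have ft: "0 < \<beta> * t * f1 t"
    using f1_pos t assms beta_pos by auto
  have mono: "f1 u \<le> f1 t" if "0 < u" "u \<le> t" for u
  proof (rule f1_mono_where_Y_nonneg)
    fix v assume "v \<in> {u..t}"
    then have "0 < \<beta> * v * f1 v" "\<beta> * v * f1 v \<le> Y v"
      using that t f1_pos assms(2) beta_pos assms(3)[of v] by auto
    then show "0 \<le> Y v"
      by linarith
  qed (use that t assms in auto)
  have "Y t = integral {0..t} Y_rhs"
    using Y_eq_integral t assms by auto
  also have "\<dots> \<le> integral {0..t} (\<lambda>_. \<beta>\<^sup>2 * t / (4 * pi) * f1 t)"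
  proof (rule integral_le_off_negligible[where N="{0}"])
    show "Y_rhs integrable_on {0..t}"
      using Y_rhs_integrable t assms by auto
    fix u assume "u \<in> {0..t}" "u \<notin> {0}"
    then have u: "0 < u" "u \<le> t"
      by auto
    have "0 < f1 u"
      using f1_pos u t assms by auto
    have "Y_rhs u \<le> \<beta>\<^sup>2 * u / (4 * pi) * f1 u"
      using Y_rhs_upper u t assms by auto
    also have "\<dots> \<le> \<beta>\<^sup>2 * t / (4 * pi) * f1 t"
      using u mono[OF u] \<open>0 < f1 u\<close> pi_gt_zero
      by (intro mult_mono divide_right_mono mult_left_mono) auto
    finally show "Y_rhs u \<le> \<beta>\<^sup>2 * t / (4 * pi) * f1 t" .
  qed auto
  also have "\<dots> = (\<beta> * t * f1 t) * (\<beta> * t / (4 * pi))"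
    using t by (simp add: power2_eq_square)
  also have "\<dots> \<le> (\<beta> * t * f1 t) * (1 / 2)"
    using t ft pi_gt_zero by (intro mult_left_mono) (auto simp: field_simps)
  finally show False
    using assms(3)[OF t(1,2)] ft by linarith
qed

lemma f1'_lower_bound:
  assumes "v \<in> {0<..<as} - exceptional" "\<And>t. t \<in> {0..as} \<Longrightarrow> \<bar>Y t\<bar> \<le> M"
  shows "- (M / (4 * pi) / v) \<le> f1' v"
proof -
  have v: "0 < v" "v < as" "0 < v * Gtrunc v"
    using assms(1) Gtrunc_pos[of v] by auto
  have "0 \<le> M"
    using assms(2)[of v] v by auto
  have "v * (4 * pi) \<le> v * Gtrunc v"
    using v Gtrunc_ge[of v] by (intro mult_left_mono) auto
  moreover have "0 < v * Gtrunc v * (v * (4 * pi))"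
    by (rule mult_pos_pos[OF v(3)]) (use v in simp)
  ultimately have "M / (v * Gtrunc v) \<le> M / (v * (4 * pi))"
    using \<open>0 \<le> M\<close> by (intro divide_left_mono) auto
  moreover have "- M / (v * Gtrunc v) \<le> Y v / (v * Gtrunc v)"
    using assms(2)[of v] v by (intro divide_right_mono) auto
  ultimately show ?thesis
    using f1'_eq[OF assms(1)] by (simp add: field_simps)
qed

text \<open>\<open>f1\<close> grows at most logarithmically at \<open>0\<close>, since \<open>Y\<close> is bounded and \<open>f1' = Y / (t G)\<close>.\<close>

lemma f1_le_powr_near_zero:
  assumes "0 < p" "0 < a" "a < as"
  obtains C where "\<And>u. 0 < u \<Longrightarrow> u \<le> a \<Longrightarrow> f1 u \<le> C * u powr (-p)"
proof -
  have "compact (Y ` {0..as})"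
    by (intro compact_continuous_image continuous_on_Y) auto
  then have "bounded (Y ` {0..as})"
    by (rule compact_imp_bounded)
  then obtain MY where "\<forall>y\<in>Y ` {0..as}. \<bar>y\<bar> \<le> MY"
    unfolding bounded_real by blast
  then have MY: "\<And>t. t \<in> {0..as} \<Longrightarrow> \<bar>Y t\<bar> \<le> MY"
    by simp
  define M where "M = MY / (4 * pi) * a powr p"
  have "0 \<le> M"
    using MY[of 0] assms by (simp add: M_def)
  have "f1 u \<le> (f1 a * a powr p + M / p) * u powr (-p)" if u: "0 < u" "u \<le> a" for u
  proof -
    have powr_int: "((\<lambda>v. - M * v powr (-p-1)) has_integral (- M * ((u powr (-p) - a powr (-p)) / p))) {u..a}"
      by (intro has_integral_mult_right has_integral_powr_neg u assms)
    have "integral {u..a} (\<lambda>v. - M * v powr (-p-1)) \<le> integral {u..a} f1'"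
    proof (rule integral_le_off_negligible[OF has_integral_integrable[OF powr_int] f1_ftc(1) negligible_exceptional])
      fix v assume v: "v \<in> {u..a}" "v \<notin> exceptional"
      then have "0 < v" "v \<le> a"
        using u by auto
      then have "MY / (4 * pi) * 1 \<le> MY / (4 * pi) * (a powr p * v powr (-p))"
        using one_le_powr_mult_powr_neg[of v a p] MY[of 0] assms
        by (intro mult_left_mono) auto
      then have "MY / (4 * pi) / v \<le> MY / (4 * pi) * (a powr p * v powr (-p)) / v"
        using \<open>0 < v\<close> by (intro divide_right_mono) auto
      also have "\<dots> = M * v powr (-p-1)"
        unfolding M_def powr_diff[of v "-p" 1] using \<open>0 < v\<close> by simp
      finally have "- M * v powr (-p-1) \<le> - (MY / (4 * pi) / v)"
        by simp
      also have "\<dots> \<le> f1' v"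
        using \<open>0 < v\<close> \<open>v \<le> a\<close> v(2) assms by (intro f1'_lower_bound MY) auto
      finally show "- M * v powr (-p-1) \<le> f1' v" .
    qed (use u assms in auto)
    also have "\<dots> = f1 a - f1 u"
      using f1_ftc(2)[of u a] u assms by auto
    moreover have "M * ((u powr (-p) - a powr (-p)) / p) \<le> M * (u powr (-p) / p)"
      using \<open>0 \<le> M\<close> assms by (intro mult_left_mono divide_right_mono) auto
    ultimately have "f1 u \<le> f1 a + M * (u powr (-p) / p)"
      using integral_unique[OF powr_int] by simp
    also have "\<dots> \<le> f1 a * (a powr p * u powr (-p)) + M * (u powr (-p) / p)"
      using one_le_powr_mult_powr_neg[of u a p] u assms f1_pos by simp
    also have "\<dots> = (f1 a * a powr p + M / p) * u powr (-p)"
      by (simp add: algebra_simps)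
    finally show ?thesis .
  qed
  then show ?thesis
    by (rule that)
qed

lemma f1_powr_bound_improves:
  assumes "0 < a" "a < as" "0 \<le> p" "p < 1"
    and below: "\<And>t. 0 < t \<Longrightarrow> t \<le> a \<Longrightarrow> Y t \<le> - (\<beta> * t * f1 t)"
    and bound: "\<And>u. 0 < u \<Longrightarrow> u \<le> a \<Longrightarrow> f1 u \<le> C * u powr (-p)"
    and t: "0 < t" "t \<le> a"
  shows "f1 t \<le> \<kappa> / (\<beta> * (1 - p)) * C * t powr (-p)"
proof -
  have powr_int: "((\<lambda>u. \<kappa> * C * u powr (-p)) has_integral (\<kappa> * C * (t powr (-p + 1) / (-p + 1)))) {0..t}"
    using assms by (intro has_integral_mult_right has_integral_powr_from_0) auto
  have "\<beta> * t * f1 t \<le> - Y t"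
    using below[OF t] by simp
  also have "\<dots> = integral {0..t} (\<lambda>u. - Y_rhs u)"
    using Y_eq_integral[of t] t assms by simp
  also have "\<dots> \<le> integral {0..t} (\<lambda>u. \<kappa> * C * u powr (-p))"
  proof (rule integral_le_off_negligible[where N="{0}", OF _ has_integral_integrable[OF powr_int]])
    show "(\<lambda>u. - Y_rhs u) integrable_on {0..t}"
      using Y_rhs_integrable[of 0 t] t assms by (auto intro: integrable_neg)
    fix u assume "u \<in> {0..t}" "u \<notin> {0}"
    then have u: "0 < u" "u \<le> a"
      using t by auto
    have "- Y_rhs u \<le> \<kappa> * f1 u"
      using Y_rhs_lower[of u] u assms by auto
    also have "\<dots> \<le> \<kappa> * (C * u powr (-p))"
      using bound[OF u] eigenvalue_nonneg by (intro mult_left_mono) auto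
    finally show "- Y_rhs u \<le> \<kappa> * C * u powr (-p)"
      by (simp add: mult.assoc)
  qed simp
  also have "\<dots> = t * (\<kappa> * C * t powr (-p) / (1 - p))"
    using integral_unique[OF powr_int] t powr_add[of t "-p" 1] by (simp add: field_simps)
  finally have "t * (\<beta> * f1 t) \<le> t * (\<kappa> * C * t powr (-p) / (1 - p))"
    by (simp add: ac_simps)
  then have "\<beta> * f1 t \<le> \<kappa> * C * t powr (-p) / (1 - p)"
    by (rule mult_le_cancel_left_pos[OF t(1), THEN iffD1])
  then show ?thesis
    using beta_pos assms by (simp add: field_simps)
qed

lemma not_below_near_zero:
  assumes "\<kappa> < \<beta>" "0 < a" "a < as" "\<And>t. 0 < t \<Longrightarrow> t \<le> a \<Longrightarrow> Y t \<le> - (\<beta> * t * f1 t)"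
  shows False
proof -
  define p where "p = (1 - \<kappa> / \<beta>) / 2"
  define r where "r = \<kappa> / (\<beta> * (1 - p))"
  have p: "0 < p" "p < 1"
    using assms(1) eigenvalue_nonneg beta_pos by (auto simp: p_def field_simps)
  have half: "\<beta> * (1 - p) = (\<beta> + \<kappa>) / 2"
    using beta_pos by (simp add: p_def field_simps)
  have "r = 2 * \<kappa> / (\<beta> + \<kappa>)"
    unfolding r_def half by simp
  then have r: "0 \<le> r" "r < 1"
    using assms(1) eigenvalue_nonneg by auto
  obtain C where C: "\<And>u. 0 < u \<Longrightarrow> u \<le> a \<Longrightarrow> f1 u \<le> C * u powr (-p)"
    using f1_le_powr_near_zero[OF p(1) assms(2,3)] by blast
  have "\<forall>u. 0 < u \<longrightarrow> u \<le> a \<longrightarrow> f1 u \<le> r ^ n * C * u powr (-p)" for n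
  proof (induction n)
    case 0
    then show ?case
      using C by simp
  next
    case (Suc n)
    then show ?case
      using f1_powr_bound_improves[of a p "r ^ n * C"] assms p by (simp add: r_def mult.assoc)
  qed
  then have "f1 a \<le> r ^ n * (C * a powr (-p))" for n
    using assms by (simp add: mult.assoc)
  moreover have "(\<lambda>n. r ^ n * (C * a powr (-p))) \<longlonglongrightarrow> 0 * (C * a powr (-p))"
    using r by (intro tendsto_mult LIMSEQ_power_zero tendsto_const) auto
  ultimately have "f1 a \<le> 0 * (C * a powr (-p))"
    by (intro LIMSEQ_le_const) auto
  then show False
    using f1_pos[rule_format, of a] assms by simp
qed

lemma abs_Y_less:
  assumes "\<kappa> < \<beta>" "0 < a" "a < as"
  shows "\<bar>Y a\<bar> < \<beta> * a * f1 a"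
proof -
  have "Y a < \<beta> * a * f1 a"
  proof (rule ccontr)
    assume "\<not> ?thesis"
    then have "\<beta> * t * f1 t \<le> Y t" if "0 < t" "t \<le> a" for t
      using contact_barrier[of 1 t a] that assms eigenvalue_nonneg beta_pos by auto
    then show False
      using not_above_near_zero assms by blast
  qed
  moreover have "- (\<beta> * a * f1 a) < Y a"
  proof (rule ccontr)
    assume "\<not> ?thesis"
    then have "Y t \<le> - (\<beta> * t * f1 t)" if "0 < t" "t \<le> a" for t
      using contact_barrier[of "-1" t a] that assms by auto
    then show False
      using not_below_near_zero assms by blast
  qed
  ultimately show ?thesis
    by (simp add: abs_less_iff)
qed

end

theorem mainTheorem14:
  fixes G :: "real \<Rightarrow> real" and \<beta> as :: real and f1 f1' Y :: "real \<Rightarrow> real"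
  assumes as_pos: "as > 0"
    and G_meas: "set_borel_measurable lebesgue {0..as} G"
    and G_bdd: "bounded (G ` {0..as})"
    and G_ge: "AE a in lebesgue. a \<in> {0..as} \<longrightarrow> G a \<ge> 4 * pi"
    and beta_pos: "\<beta> > 0"
    and eigen: "weak_eigen G \<beta> as (kappa1 G \<beta> as)
                  (\<lambda>a. complex_of_real (f1 a)) (\<lambda>a. complex_of_real (f1' a))"
    and f1_pos: "\<forall>a\<in>{0<..<as}. f1 a > 0"
    and f1_locAC: "\<forall>x\<in>{0<..as}. \<forall>y\<in>{0<..as}. x \<le> y \<longrightarrow>
                     set_integrable lebesgue {x..y} f1' \<and>
                     f1 y - f1 x = (LINT t:{x..y}|lebesgue. f1' t)"
    and Y_ac: "abs_cont_on {0..as} Y"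
    and Y_rep: "AE a in lebesgue. a \<in> {0<..<as} \<longrightarrow> Y a = Pfun G a * f1' a"
    and small: "kappa1 G \<beta> as < \<beta>"
  shows "\<forall>a\<in>{0<..<as}. \<bar>Y a\<bar>\<^sup>2 - \<beta>\<^sup>2 * a\<^sup>2 * \<bar>f1 a\<bar>\<^sup>2 < 0"
proof
  interpret positive_eigenfunction G \<beta> as "kappa1 G \<beta> as" f1 f1' Y
    by unfold_locales (fact G_meas G_ge beta_pos eigen f1_pos f1_locAC Y_ac Y_rep)+
  fix a assume "a \<in> {0<..<as}"
  then have "\<bar>Y a\<bar> < \<beta> * a * f1 a"
    using abs_Y_less small by auto
  then have "\<bar>Y a\<bar>\<^sup>2 < (\<beta> * a * f1 a)\<^sup>2"
    by (intro power_strict_mono) auto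
  then show "\<bar>Y a\<bar>\<^sup>2 - \<beta>\<^sup>2 * a\<^sup>2 * \<bar>f1 a\<bar>\<^sup>2 < 0"
    by (simp add: power_mult_distrib)
qed

end
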